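(* The class of unital equivariantly supported reflexive based quantal frames satisfying the inverse law can be identified with the class of inverse quantal frames. Precisely: if $Q$ is an equivariantly supported reflexive based quantal frame (with base locale $A$, support $\varsigma$ and $\upsilon:Q\to A$) which has a multiplicative unit $e$ and satisfies the inverse law, then $Q$, as a unital involutive quantale, is an inverse quantal frame; and conversely every inverse quantal frame $Q$, regarded as a based quantal frame over $A={\downarrow}e$ with actions given by multiplication, support $\varsigma(q)=q1_Q\wedge e$ and $\upsilon(q)=q\wedge e$, is an equivariantly supported reflexive based quantal frame satisfying the inverse law.
   Context: For a locale $A$, an $A$-$A$-bimodule is a sup-lattice $M$ with actions $a\triangleright m$, $m\triangleleft a$ preserving joins in each variable, with $1_A\triangleright m=m$, $(a\wedge b)\triangleright m=a\triangleright(b\triangleright m)$, $m\triangleleft1_A=m$, $m\triangleleft(a\wedge b)=(m\triangleleft a)\triangleleft b$, $(a\triangleright m)\triangleleft b=a\triangleright(m\triangleleft b)$. An $A$-$A$-quantale is such a $Q$ with associative join-preserving multiplication and $(a\triangleright x)y=a\triangleright(xy)$, $(x\triangleleft a)y=x(a\triangleright y)$, $(xy)\triangleleft a=x(y\triangleleft a)$; involutive if there is a join-preserving $x\mapsto x^*$ with $x^{**}=x$, $(xy)^*=y^*x^*$, $(a\triangleright(x\triangleleft b))^*=b\triangleright(x^*\triangleleft a)$. $1_Q$ is the top. A support is a join-preserving $\varsigma:Q\to A$ with $\varsigma(1_Q)=1_A$, $\varsigma(x)\triangleright y\le xx^*y$, $\varsigma(x)\triangleright x=x$; equivariant if $\varsigma(a\triangleright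 x)=a\wedge\varsigma(x)$. A based quantal frame is an involutive $A$-$A$-quantale which is a frame with $(a\triangleright x)\wedge y=a\triangleright(x\wedge y)$, $(x\triangleleft a)\wedge y=(x\wedge y)\triangleleft a$; reflexive: a frame homomorphism $\upsilon:Q\to A$ with $\upsilon(a\triangleright1_Q)=a=\upsilon(1_Q\triangleleft a)$. Inverse law: $\upsilon(a)\triangleright1_Q=\bigvee_{xy^*\le a}x\wedge y$ for all $a\in Q$. An inverse quantal frame is a unital involutive quantale $Q$ (unit $e$) whose lattice is a frame, with a stable unital support, i.e. a join-preserving $\varsigma:Q\to Q$ with $\varsigma(x)\le e$, $\varsigma(x)\le xx^*$, $x\le\varsigma(x)x$ and $\varsigma(xy)=\varsigma(x\varsigma(y))$, such that $\bigvee\{s\in Q\mid ss^*\vee s^*s\le e\}=1_Q$. *)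

theory Defs
  imports Main
begin

definition is_frame_type :: "'q::complete_lattice itself \<Rightarrow> bool" where
  "is_frame_type _ \<longleftrightarrow> (\<forall>(x::'q) S. inf x (Sup S) = Sup ((inf x) ` S))"

text \<open>A locale A is represented by a carrier set AC inside a complete lattice, closed under
  arbitrary joins and binary meets (computed in the ambient lattice), with the frame
  distributive law. Its top element is Sup AC. (Any locale A is such a carrier with AC = UNIV;
  the down-set of an element of a frame is another instance.)\<close>
definition locale_carrier :: "'a::complete_lattice set \<Rightarrow> bool" where
  "locale_carrier AC \<longleftrightarrow>
     (\<forall>S. S \<subseteq> AC \<longrightarrow> Sup S \<in> AC) \<and>
     (\<forall>a\<in>AC. \<forall>b\<in>AC. inf a b \<in> AC) \<and>
     (\<forall>a\<in>AC. \<forall>S. S \<subseteq> AC \<longrightarrow> inf a (Sup S) = Sup ((inf a) ` S))"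

abbreviation topA :: "'a::complete_lattice set \<Rightarrow> 'a" where
  "topA AC \<equiv> Sup AC"

definition join_pres :: "('x::complete_lattice \<Rightarrow> 'y::complete_lattice) \<Rightarrow> bool" where
  "join_pres f \<longleftrightarrow> (\<forall>X. f (Sup X) = Sup (f ` X))"

definition bimodule ::
  "'a::complete_lattice set \<Rightarrow> ('a \<Rightarrow> 'q::complete_lattice \<Rightarrow> 'q) \<Rightarrow> ('q \<Rightarrow> 'a \<Rightarrow> 'q) \<Rightarrow> bool" where
  "bimodule AC lact ract \<longleftrightarrow>
     locale_carrier AC \<and>
     (\<forall>S m. S \<subseteq> AC \<longrightarrow> lact (Sup S) m = Sup ((\<lambda>a. lact a m) ` S)) \<and>
     (\<forall>a\<in>AC. join_pres (lact a)) \<and>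
     (\<forall>S m. S \<subseteq> AC \<longrightarrow> ract m (Sup S) = Sup ((\<lambda>a. ract m a) ` S)) \<and>
     (\<forall>a\<in>AC. join_pres (\<lambda>m. ract m a)) \<and>
     (\<forall>m. lact (topA AC) m = m) \<and>
     (\<forall>a\<in>AC. \<forall>b\<in>AC. \<forall>m. lact (inf a b) m = lact a (lact b m)) \<and>
     (\<forall>m. ract m (topA AC) = m) \<and>
     (\<forall>a\<in>AC. \<forall>b\<in>AC. \<forall>m. ract m (inf a b) = ract (ract m a) b) \<and>
     (\<forall>a\<in>AC. \<forall>b\<in>AC. \<forall>m. ract (lact a m) b = lact a (ract m b))"

definition AA_quantale ::
  "'a::complete_lattice set \<Rightarrow> ('a \<Rightarrow> 'q::complete_lattice \<Rightarrow> 'q) \<Rightarrow> ('q \<Rightarrow> 'a \<Rightarrow> 'q)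
   \<Rightarrow> ('q \<Rightarrow> 'q \<Rightarrow> 'q) \<Rightarrow> bool" where
  "AA_quantale AC lact ract mult \<longleftrightarrow>
     bimodule AC lact ract \<and>
     (\<forall>x y z. mult (mult x y) z = mult x (mult y z)) \<and>
     (\<forall>y. join_pres (\<lambda>x. mult x y)) \<and>
     (\<forall>x. join_pres (mult x)) \<and>
     (\<forall>a\<in>AC. \<forall>x y. mult (lact a x) y = lact a (mult x y)) \<and>
     (\<forall>a\<in>AC. \<forall>x y. mult (ract x a) y = mult x (lact a y)) \<and>
     (\<forall>a\<in>AC. \<forall>x y. ract (mult x y) a = mult x (ract y a))"

definition involutive_AA_quantale ::
  "'a::complete_lattice set \<Rightarrow> ('a \<Rightarrow> 'q::complete_lattice \<Rightarrow> 'q) \<Rightarrow> ('q \<Rightarrow> 'a \<Rightarrow> 'q)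
   \<Rightarrow> ('q \<Rightarrow> 'q \<Rightarrow> 'q) \<Rightarrow> ('q \<Rightarrow> 'q) \<Rightarrow> bool" where
  "involutive_AA_quantale AC lact ract mult star \<longleftrightarrow>
     AA_quantale AC lact ract mult \<and>
     join_pres star \<and>
     (\<forall>x. star (star x) = x) \<and>
     (\<forall>x y. star (mult x y) = mult (star y) (star x)) \<and>
     (\<forall>a\<in>AC. \<forall>b\<in>AC. \<forall>x. star (lact a (ract x b)) = lact b (ract (star x) a))"

definition is_support ::
  "'a::complete_lattice set \<Rightarrow> ('a \<Rightarrow> 'q::complete_lattice \<Rightarrow> 'q)
   \<Rightarrow> ('q \<Rightarrow> 'q \<Rightarrow> 'q) \<Rightarrow> ('q \<Rightarrow> 'q) \<Rightarrow> ('q \<Rightarrow> 'a) \<Rightarrow> bool" where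
  "is_support AC lact mult star \<sigma> \<longleftrightarrow>
     (\<forall>x. \<sigma> x \<in> AC) \<and>
     join_pres \<sigma> \<and>
     \<sigma> top = topA AC \<and>
     (\<forall>x y. lact (\<sigma> x) y \<le> mult (mult x (star x)) y) \<and>
     (\<forall>x. lact (\<sigma> x) x = x)"

definition equivariant_support ::
  "'a::complete_lattice set \<Rightarrow> ('a \<Rightarrow> 'q::complete_lattice \<Rightarrow> 'q) \<Rightarrow> ('q \<Rightarrow> 'a) \<Rightarrow> bool" where
  "equivariant_support AC lact \<sigma> \<longleftrightarrow> (\<forall>a\<in>AC. \<forall>x. \<sigma> (lact a x) = inf a (\<sigma> x))"

definition based_quantal_frame ::
  "'a::complete_lattice set \<Rightarrow> ('a \<Rightarrow> 'q::complete_lattice \<Rightarrow> 'q) \<Rightarrow> ('q \<Rightarrow> 'a \<Rightarrow> 'q)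
   \<Rightarrow> ('q \<Rightarrow> 'q \<Rightarrow> 'q) \<Rightarrow> ('q \<Rightarrow> 'q) \<Rightarrow> bool" where
  "based_quantal_frame AC lact ract mult star \<longleftrightarrow>
     involutive_AA_quantale AC lact ract mult star \<and>
     is_frame_type TYPE('q) \<and>
     (\<forall>a\<in>AC. \<forall>x y. inf (lact a x) y = lact a (inf x y)) \<and>
     (\<forall>a\<in>AC. \<forall>x y. inf (ract x a) y = ract (inf x y) a)"

definition frame_hom_to ::
  "'a::complete_lattice set \<Rightarrow> ('q::complete_lattice \<Rightarrow> 'a) \<Rightarrow> bool" where
  "frame_hom_to AC f \<longleftrightarrow>
     (\<forall>x. f x \<in> AC) \<and> join_pres f \<and> (\<forall>x y. f (inf x y) = inf (f x) (f y)) \<and> f top = topA AC"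

definition reflexive_bqf ::
  "'a::complete_lattice set \<Rightarrow> ('a \<Rightarrow> 'q::complete_lattice \<Rightarrow> 'q) \<Rightarrow> ('q \<Rightarrow> 'a \<Rightarrow> 'q)
   \<Rightarrow> ('q \<Rightarrow> 'a) \<Rightarrow> bool" where
  "reflexive_bqf AC lact ract \<upsilon> \<longleftrightarrow>
     frame_hom_to AC \<upsilon> \<and>
     (\<forall>a\<in>AC. \<upsilon> (lact a top) = a \<and> \<upsilon> (ract top a) = a)"

definition inverse_law ::
  "('a \<Rightarrow> 'q::complete_lattice \<Rightarrow> 'q) \<Rightarrow> ('q \<Rightarrow> 'q \<Rightarrow> 'q) \<Rightarrow> ('q \<Rightarrow> 'q) \<Rightarrow> ('q \<Rightarrow> 'a) \<Rightarrow> bool" where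
  "inverse_law lact mult star \<upsilon> \<longleftrightarrow>
     (\<forall>a. lact (\<upsilon> a) top = Sup {inf x y | x y. mult x (star y) \<le> a})"

definition mult_unit :: "('q \<Rightarrow> 'q \<Rightarrow> 'q) \<Rightarrow> 'q \<Rightarrow> bool" where
  "mult_unit mult e \<longleftrightarrow> (\<forall>x. mult e x = x \<and> mult x e = x)"

definition unital_involutive_quantale ::
  "('q::complete_lattice \<Rightarrow> 'q \<Rightarrow> 'q) \<Rightarrow> ('q \<Rightarrow> 'q) \<Rightarrow> 'q \<Rightarrow> bool" where
  "unital_involutive_quantale mult star e \<longleftrightarrow>
     (\<forall>x y z. mult (mult x y) z = mult x (mult y z)) \<and>
     (\<forall>y. join_pres (\<lambda>x. mult x y)) \<and>
     (\<forall>x. join_pres (mult x)) \<and>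
     mult_unit mult e \<and>
     join_pres star \<and>
     (\<forall>x. star (star x) = x) \<and>
     (\<forall>x y. star (mult x y) = mult (star y) (star x))"

definition stable_unital_support ::
  "('q::complete_lattice \<Rightarrow> 'q \<Rightarrow> 'q) \<Rightarrow> ('q \<Rightarrow> 'q) \<Rightarrow> 'q \<Rightarrow> ('q \<Rightarrow> 'q) \<Rightarrow> bool" where
  "stable_unital_support mult star e \<sigma> \<longleftrightarrow>
     join_pres \<sigma> \<and>
     (\<forall>x. \<sigma> x \<le> e) \<and>
     (\<forall>x. \<sigma> x \<le> mult x (star x)) \<and>
     (\<forall>x. x \<le> mult (\<sigma> x) x) \<and>
     (\<forall>x y. \<sigma> (mult x y) = \<sigma> (mult x (\<sigma> y)))"

definition inverse_quantal_frame ::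
  "('q::complete_lattice \<Rightarrow> 'q \<Rightarrow> 'q) \<Rightarrow> ('q \<Rightarrow> 'q) \<Rightarrow> 'q \<Rightarrow> bool" where
  "inverse_quantal_frame mult star e \<longleftrightarrow>
     unital_involutive_quantale mult star e \<and>
     is_frame_type TYPE('q) \<and>
     (\<exists>\<sigma>. stable_unital_support mult star e \<sigma>) \<and>
     Sup {s. sup (mult s (star s)) (mult (star s) s) \<le> e} = top"

end

theory Submission
  imports Defs
begin

text \<open>
  Given a support \<open>\<varsigma>\<close> on a based quantal frame with unit \<open>e\<close>, the map \<open>x \<mapsto> \<varsigma>(x) \<triangleright> e\<close> is a
  stable unital support: stability \<open>\<varsigma>(xy) = \<varsigma>(x \<varsigma>(y))\<close> follows from \<open>xy = x \<varsigma>(y) y\<close> and the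
  inequality \<open>\<varsigma>(xz) \<le> \<varsigma>(x)\<close>, which is where equivariance enters. The inverse law at \<open>e\<close>
  says that the elements \<open>x \<and> y\<close> with \<open>xy\<^sup>* \<le> e\<close> join to \<open>\<upsilon>(e) \<triangleright> 1\<close>, which is \<open>1\<close> because it lies
  above \<open>e\<close>; meeting this cover with its image under the involution gives a cover by partial
  units.

  Conversely, in an inverse quantal frame every stable support equals \<open>x \<mapsto> x1 \<and> e\<close>, elements
  below \<open>e\<close> multiply by meets and act by \<open>a x = a1 \<and> x\<close>, which yields all the axioms of a
  based quantal frame over \<open>\<down>e\<close>. For the inverse law, \<open>b1\<close> with \<open>b \<le> e\<close> is the join of the
  \<open>bs\<close> for partial units \<open>s\<close>, and \<open>(bs)(bs)\<^sup>* \<le> b\<close>; conversely every \<open>w = x \<and> y\<close> with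
  \<open>xy\<^sup>* \<le> a\<close> satisfies \<open>w = \<varsigma>(w) w \<le> (a \<and> e) 1\<close>.
\<close>

lemma join_pres_mono:
  assumes "join_pres f"
  shows "mono f"
proof
  fix x y :: 'a
  assume "x \<le> y"
  then have "f y = Sup {f x, f y}"
    using assms[unfolded join_pres_def, rule_format, of "{x, y}"] by (simp add: sup_absorb2)
  then show "f x \<le> f y"
    by (metis Sup_upper insertI1)
qed

lemma join_pres_mult_mono:
  assumes "\<And>y. join_pres (\<lambda>x. mult x y)" and "\<And>x. join_pres (mult x)"
    and "x \<le> x'" and "y \<le> y'"
  shows "mult x y \<le> mult x' y'"
  using monoD[OF join_pres_mono[OF assms(1)] assms(3)] monoD[OF join_pres_mono[OF assms(2)] assms(4)]
  by (rule order_trans)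

lemma frame_inf_Sup:
  fixes x :: "'q::complete_lattice"
  assumes "is_frame_type TYPE('q)"
  shows "inf x (Sup S) = (SUP s\<in>S. inf x s)"
  using assms unfolding is_frame_type_def by blast

lemma frame_inf_Sup_Sup:
  fixes L R :: "'q::complete_lattice set"
  assumes frame: "is_frame_type TYPE('q)"
  shows "inf (Sup L) (Sup R) = Sup {inf l r | l r. l \<in> L \<and> r \<in> R}"
proof (rule antisym)
  have "inf (Sup L) (Sup R) = (SUP r\<in>R. inf r (Sup L))"
    by (simp add: frame_inf_Sup[OF frame] inf_commute)
  also have "\<dots> = (SUP r\<in>R. SUP l\<in>L. inf l r)"
    by (simp add: frame_inf_Sup[OF frame] inf_commute)
  also have "\<dots> \<le> Sup {inf l r | l r. l \<in> L \<and> r \<in> R}"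
    by (blast intro: SUP_least Sup_upper)
  finally show "inf (Sup L) (Sup R) \<le> Sup {inf l r | l r. l \<in> L \<and> r \<in> R}" .
next
  show "Sup {inf l r | l r. l \<in> L \<and> r \<in> R} \<le> inf (Sup L) (Sup R)"
    by (rule Sup_least) (auto intro: le_infI1 le_infI2 Sup_upper)
qed

lemma frame_Sup_inf:
  fixes x :: "'q::complete_lattice"
  assumes "is_frame_type TYPE('q)"
  shows "inf (Sup S) x = (SUP s\<in>S. inf s x)"
  using frame_inf_Sup[OF assms] by (simp add: inf_commute)

lemma Sup_Collect_le: "Sup {a. a \<le> u} = (u::'a::complete_lattice)"
  using Sup_atMost[of u] by (simp add: atMost_def)

lemma locale_carrier_atMost:
  fixes u :: "'q::complete_lattice"
  assumes "is_frame_type TYPE('q)"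
  shows "locale_carrier {a. a \<le> u}"
  unfolding locale_carrier_def using frame_inf_Sup[OF assms] by (auto intro: Sup_least le_infI1)

locale unital_inv_quantale =
  fixes mult :: "'q::complete_lattice \<Rightarrow> 'q \<Rightarrow> 'q" (infixl \<open>\<cdot>\<close> 70)
    and star :: "'q \<Rightarrow> 'q"
    and e :: 'q
  assumes unital_involutive_quantale: "unital_involutive_quantale mult star e"
begin

lemma mult_assoc: "x \<cdot> y \<cdot> z = x \<cdot> (y \<cdot> z)"
  and join_pres_mult_left: "join_pres (\<lambda>x. x \<cdot> y)"
  and join_pres_mult_right: "join_pres (mult x)"
  and unit_left: "e \<cdot> x = x"
  and unit_right: "x \<cdot> e = x"
  and join_pres_star: "join_pres star"
  and star_star: "star (star x) = x"
  and star_mult: "star (x \<cdot> y) = star y \<cdot> star x"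
  using unital_involutive_quantale
  unfolding unital_involutive_quantale_def mult_unit_def by auto

lemma mult_mono: "x \<le> x' \<Longrightarrow> y \<le> y' \<Longrightarrow> x \<cdot> y \<le> x' \<cdot> y'"
  by (rule join_pres_mult_mono[OF join_pres_mult_left join_pres_mult_right])

lemma star_mono: "x \<le> y \<Longrightarrow> star x \<le> star y"
  using join_pres_mono[OF join_pres_star] by (rule monoD)

lemma star_inject: "star x = star y \<longleftrightarrow> x = y"
  by (metis star_star)

lemma star_le_iff: "star x \<le> y \<longleftrightarrow> x \<le> star y"
  by (metis star_mono star_star)

lemma star_unit: "star e = e"
  by (metis star_mult star_star unit_right)

lemma star_top: "star top = top"
  by (metis star_le_iff top.extremum_unique top_greatest)

lemma star_inf: "star (inf x y) = inf (star x) (star y)"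
proof (rule antisym)
  show "star (inf x y) \<le> inf (star x) (star y)"
    by (simp add: star_mono)
  have "star (inf (star x) (star y)) \<le> inf x y"
    by (simp add: star_le_iff star_mono)
  then show "inf (star x) (star y) \<le> star (inf x y)"
    unfolding star_le_iff .
qed

lemma star_le_unit: "a \<le> e \<Longrightarrow> star a \<le> e"
  using star_mono star_unit by metis

lemma mult_star_inf_le: "x \<cdot> star y \<le> a \<Longrightarrow> inf x y \<cdot> star (inf x y) \<le> a"
  using mult_mono[OF inf_le1 star_mono[OF inf_le2], of x y] by (rule order_trans)

lemma partial_units_Sup_eq_top:
  assumes frame: "is_frame_type TYPE('q)"
    and cover: "Sup {inf x y | x y. x \<cdot> star y \<le> e} = top"
  shows "Sup {s. sup (s \<cdot> star s) (star s \<cdot> s) \<le> e} = top"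
proof -
  let ?L = "{inf x y | x y. x \<cdot> star y \<le> e}"
  have left: "l \<cdot> star l \<le> e" if "l \<in> ?L" for l
    using that mult_star_inf_le by blast
  have "Sup (star ` ?L) = top"
    using cover join_pres_star star_top unfolding join_pres_def by metis
  then have "top = inf (Sup ?L) (Sup (star ` ?L))"
    using cover by simp
  also have "\<dots> = Sup {inf l r | l r. l \<in> ?L \<and> r \<in> star ` ?L}"
    by (rule frame_inf_Sup_Sup[OF frame])
  also have "\<dots> \<le> Sup {s. sup (s \<cdot> star s) (star s \<cdot> s) \<le> e}"
  proof (rule Sup_least)
    fix s assume "s \<in> {inf l r | l r. l \<in> ?L \<and> r \<in> star ` ?L}"
    then obtain l l' where l: "l \<in> ?L" and l': "l' \<in> ?L" and s: "s = inf l (star l')"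
      by blast
    have "s \<cdot> star s \<le> l \<cdot> star l"
      unfolding s by (intro mult_mono star_mono) simp_all
    moreover have "star s \<cdot> s \<le> l' \<cdot> star l'"
      using mult_mono[OF star_mono[OF inf_le2] inf_le2, of l "star l'" l] unfolding s
      by (simp add: star_star)
    ultimately have "sup (s \<cdot> star s) (star s \<cdot> s) \<le> e"
      using left[OF l] left[OF l'] by auto
    then show "s \<le> Sup {s. sup (s \<cdot> star s) (star s \<cdot> s) \<le> e}"
      by (simp add: Sup_upper)
  qed
  finally show ?thesis
    by (rule top_le)
qed

end

lemma unital_involutive_quantale_if_involutive_AA_quantale:
  assumes "involutive_AA_quantale AC lact ract mult star" and "mult_unit mult e"
  shows "unital_involutive_quantale mult star e"
  using assms unfolding involutive_AA_quantale_def AA_quantale_def unital_involutive_quantale_def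
  by blast

lemma bimodule_lact_mono:
  assumes "bimodule AC lact ract" and "a \<in> AC" and "b \<in> AC" and "a \<le> b"
  shows "lact a m \<le> lact b m"
proof -
  have "lact (Sup {a, b}) m = Sup {lact a m, lact b m}"
    using assms(1) unfolding bimodule_def
    by (auto dest!: spec[of _ "{a, b}"] simp: assms(2,3))
  then have "lact b m = sup (lact a m) (lact b m)"
    using assms(4) by (simp add: sup_absorb2)
  then show ?thesis
    by (metis sup_ge1)
qed

lemma AA_quantale_mult_mono:
  assumes "AA_quantale AC lact ract mult" and "x \<le> x'" and "y \<le> y'"
  shows "mult x y \<le> mult x' y'"
proof -
  have "\<And>y. join_pres (\<lambda>x. mult x y)" and "\<And>x. join_pres (mult x)"
    using assms(1) unfolding AA_quantale_def by blast+
  then show ?thesis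
    using assms(2,3) by (rule join_pres_mult_mono)
qed

lemma equivariant_support_mult_le:
  assumes quantale: "AA_quantale AC lact ract mult"
    and support: "is_support AC lact mult star \<sigma>"
    and equivariant: "equivariant_support AC lact \<sigma>"
  shows "\<sigma> (mult x y) \<le> \<sigma> x"
proof -
  have "mult x y \<le> mult x top"
    using quantale by (rule AA_quantale_mult_mono) simp_all
  then have "\<sigma> (mult x y) \<le> \<sigma> (mult x top)"
    using join_pres_mono support unfolding is_support_def by (blast dest: monoD)
  also have "mult x top = mult (lact (\<sigma> x) x) top"
    using support unfolding is_support_def by simp
  also have "\<dots> = lact (\<sigma> x) (mult x top)"
    using quantale support unfolding AA_quantale_def is_support_def by blast
  also have "\<sigma> \<dots> = inf (\<sigma> x) (\<sigma> (mult x top))"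
    using equivariant support unfolding equivariant_support_def is_support_def by blast
  finally show ?thesis
    by simp
qed

lemma equivariant_support_stable:
  assumes quantale: "AA_quantale AC lact ract mult"
    and support: "is_support AC lact mult star \<sigma>"
    and equivariant: "equivariant_support AC lact \<sigma>"
    and unit: "mult_unit mult e"
  shows "\<sigma> (mult x y) = \<sigma> (mult x (lact (\<sigma> y) e))"
proof (rule antisym)
  have \<sigma>_mono: "mono \<sigma>"
    using support unfolding is_support_def by (blast intro: join_pres_mono)
  have assoc: "mult (mult x z) w = mult x (mult z w)" for z w
    using quantale unfolding AA_quantale_def by blast
  have "mult (lact (\<sigma> y) e) y = lact (\<sigma> y) (mult e y)"
    using quantale support unfolding AA_quantale_def is_support_def by blast
  then have "mult x y = mult (mult x (lact (\<sigma> y) e)) y"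
    using support unit unfolding is_support_def mult_unit_def by (simp add: assoc)
  then show "\<sigma> (mult x y) \<le> \<sigma> (mult x (lact (\<sigma> y) e))"
    using equivariant_support_mult_le[OF quantale support equivariant] by metis
  have "lact (\<sigma> y) e \<le> mult y (star y)"
    using support unit unfolding is_support_def mult_unit_def by metis
  then have "mult x (lact (\<sigma> y) e) \<le> mult (mult x y) (star y)"
    using AA_quantale_mult_mono[OF quantale order_refl] by (simp add: assoc)
  then have "\<sigma> (mult x (lact (\<sigma> y) e)) \<le> \<sigma> (mult (mult x y) (star y))"
    using \<sigma>_mono by (rule monoD[rotated])
  also have "\<dots> \<le> \<sigma> (mult x y)"
    by (rule equivariant_support_mult_le[OF quantale support equivariant])
  finally show "\<sigma> (mult x (lact (\<sigma> y) e)) \<le> \<sigma> (mult x y)" .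
qed

lemma stable_unital_support_if_equivariant_support:
  assumes quantale: "AA_quantale AC lact ract mult"
    and support: "is_support AC lact mult star \<sigma>"
    and equivariant: "equivariant_support AC lact \<sigma>"
    and unit: "mult_unit mult e"
  shows "stable_unital_support mult star e (\<lambda>x. lact (\<sigma> x) e)"
proof -
  from quantale have bimodule: "bimodule AC lact ract"
    and lact_mult: "\<And>a x y. a \<in> AC \<Longrightarrow> mult (lact a x) y = lact a (mult x y)"
    unfolding AA_quantale_def by auto
  then have lact_Sup: "\<And>S m. S \<subseteq> AC \<Longrightarrow> lact (Sup S) m = (SUP a\<in>S. lact a m)"
    unfolding bimodule_def by blast
  from support have \<sigma>_AC: "\<And>x. \<sigma> x \<in> AC" and join_pres_\<sigma>: "join_pres \<sigma>"
    unfolding is_support_def by auto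
  have "join_pres (\<lambda>x. lact (\<sigma> x) e)"
    unfolding join_pres_def
  proof
    fix X
    have "lact (\<sigma> (Sup X)) e = lact (Sup (\<sigma> ` X)) e"
      using join_pres_\<sigma> unfolding join_pres_def by simp
    also have "\<dots> = (SUP x\<in>X. lact (\<sigma> x) e)"
      using lact_Sup[of "\<sigma> ` X" e] \<sigma>_AC by (auto simp: image_image)
    finally show "lact (\<sigma> (Sup X)) e = (SUP x\<in>X. lact (\<sigma> x) e)" .
  qed
  moreover have "lact (\<sigma> x) e \<le> e" for x
  proof -
    have "Sup AC \<in> AC" and "\<sigma> x \<le> Sup AC"
      using bimodule \<sigma>_AC unfolding bimodule_def locale_carrier_def by (auto intro: Sup_upper)
    then have "lact (\<sigma> x) e \<le> lact (Sup AC) e"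
      using bimodule_lact_mono[OF bimodule \<sigma>_AC] by blast
    then show ?thesis
      using bimodule unfolding bimodule_def by simp
  qed
  moreover have "x \<le> mult (lact (\<sigma> x) e) x" for x
    using lact_mult[OF \<sigma>_AC] support unit unfolding is_support_def mult_unit_def by simp
  ultimately show ?thesis
    unfolding stable_unital_support_def
    using equivariant_support_stable[OF quantale support equivariant unit] support unit
    unfolding is_support_def mult_unit_def by metis
qed

lemma inverse_law_Sup_eq_top:
  assumes bqf: "based_quantal_frame AC lact ract mult star"
    and \<upsilon>_AC: "\<upsilon> e \<in> AC" and unit: "mult_unit mult e"
    and law: "inverse_law lact mult star \<upsilon>"
  shows "Sup {inf x y | x y. mult x (star y) \<le> e} = top"
proof -
  from bqf have involutive: "involutive_AA_quantale AC lact ract mult star"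
    and lact_inf: "inf (lact (\<upsilon> e) x) y = lact (\<upsilon> e) (inf x y)" for x y
    using \<upsilon>_AC unfolding based_quantal_frame_def by auto
  then have lact_mult: "mult (lact (\<upsilon> e) x) y = lact (\<upsilon> e) (mult x y)" for x y
    using \<upsilon>_AC unfolding involutive_AA_quantale_def AA_quantale_def by blast
  interpret unital_inv_quantale mult star e
    using unital_involutive_quantale_if_involutive_AA_quantale[OF involutive unit]
    by unfold_locales
  let ?L = "{inf x y | x y. mult x (star y) \<le> e}"
  have cover: "lact (\<upsilon> e) top = Sup ?L"
    using law unfolding inverse_law_def by blast
  have "e = inf e e \<and> mult e (star e) \<le> e"
    by (simp add: star_unit unit_right)
  then have "e \<in> ?L"
    by blast
  then have "e \<le> lact (\<upsilon> e) top"
    unfolding cover by (rule Sup_upper)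
  then have "lact (\<upsilon> e) e = e"
    using lact_inf[of top e] by (simp add: inf_absorb2)
  then have "lact (\<upsilon> e) top = top"
    using lact_mult[of e top] by (simp add: unit_left)
  then show ?thesis
    using cover by simp
qed

lemma inverse_quantal_frame_if_inverse_law:
  fixes lact :: "'a::complete_lattice \<Rightarrow> 'q::complete_lattice \<Rightarrow> 'q"
  assumes bqf: "based_quantal_frame AC lact ract mult star"
    and support: "is_support AC lact mult star \<sigma>" and equivariant: "equivariant_support AC lact \<sigma>"
    and reflexive: "reflexive_bqf AC lact ract \<upsilon>" and unit: "mult_unit mult e"
    and law: "inverse_law lact mult star \<upsilon>"
  shows "inverse_quantal_frame mult star e"
proof -
  from bqf have involutive: "involutive_AA_quantale AC lact ract mult star"
    and quantale: "AA_quantale AC lact ract mult" and frame: "is_frame_type TYPE('q)"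
    unfolding based_quantal_frame_def involutive_AA_quantale_def by blast+
  have \<upsilon>_AC: "\<upsilon> e \<in> AC"
    using reflexive unfolding reflexive_bqf_def frame_hom_to_def by blast
  have uiq: "unital_involutive_quantale mult star e"
    using involutive unit by (rule unital_involutive_quantale_if_involutive_AA_quantale)
  interpret unital_inv_quantale mult star e
    using uiq by unfold_locales
  show ?thesis
    unfolding inverse_quantal_frame_def
    using uiq frame stable_unital_support_if_equivariant_support[OF quantale support equivariant unit]
      partial_units_Sup_eq_top[OF frame inverse_law_Sup_eq_top[OF bqf \<upsilon>_AC unit law]]
    by blast
qed

locale stably_supported_quantale = unital_inv_quantale +
  fixes \<zeta> :: "'q::complete_lattice \<Rightarrow> 'q"
  assumes stable_unital_support: "stable_unital_support mult star e \<zeta>"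
begin

lemma join_pres_support: "join_pres \<zeta>"
  and support_le_unit: "\<zeta> x \<le> e"
  and support_le_mult_star: "\<zeta> x \<le> x \<cdot> star x"
  and le_support_mult: "x \<le> \<zeta> x \<cdot> x"
  and support_stable: "\<zeta> (x \<cdot> y) = \<zeta> (x \<cdot> \<zeta> y)"
  using stable_unital_support unfolding stable_unital_support_def by auto

lemma support_mono: "x \<le> y \<Longrightarrow> \<zeta> x \<le> \<zeta> y"
  using join_pres_mono[OF join_pres_support] by (rule monoD)

lemma support_mult: "\<zeta> x \<cdot> x = x"
  using mult_mono[OF support_le_unit order_refl, of x x] le_support_mult[of x]
  by (simp add: unit_left antisym)

lemma support_subunit: "a \<le> e \<Longrightarrow> \<zeta> a = a"
proof (rule antisym)
  assume a: "a \<le> e"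
  have "\<zeta> a \<le> a \<cdot> star a" by (rule support_le_mult_star)
  also have "\<dots> \<le> a \<cdot> e" using a by (intro mult_mono star_le_unit) simp_all
  finally show "\<zeta> a \<le> a" by (simp add: unit_right)
  have "a \<le> \<zeta> a \<cdot> a" by (rule le_support_mult)
  also have "\<dots> \<le> \<zeta> a \<cdot> e" using a by (intro mult_mono) simp_all
  finally show "a \<le> \<zeta> a" by (simp add: unit_right)
qed

lemma subunit_mult_star: "a \<le> e \<Longrightarrow> a \<cdot> star a = a"
  using mult_mono[OF order_refl star_le_unit, of a a] support_le_mult_star[of a]
  by (simp add: unit_right support_subunit antisym)

lemma star_subunit: "a \<le> e \<Longrightarrow> star a = a"
  using star_mult[of a "star a"] by (simp add: star_star subunit_mult_star)

lemma subunit_mult: "a \<le> e \<Longrightarrow> b \<le> e \<Longrightarrow> a \<cdot> b = inf a b"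
proof (rule antisym)
  assume a: "a \<le> e" and b: "b \<le> e"
  show "a \<cdot> b \<le> inf a b"
    using mult_mono[OF order_refl b, of a] mult_mono[OF a order_refl, of b]
    by (simp add: unit_left unit_right)
  have "inf a b = inf a b \<cdot> star (inf a b)"
    using a by (simp add: le_infI1 subunit_mult_star)
  also have "\<dots> = inf a b \<cdot> inf a b"
    using a by (simp add: le_infI1 star_subunit)
  also have "\<dots> \<le> a \<cdot> b"
    by (rule mult_mono) simp_all
  finally show "inf a b \<le> a \<cdot> b" .
qed

lemma support_top: "\<zeta> top = e"
  using support_mono[of e top] by (simp add: antisym support_le_unit support_subunit)

lemma support_mult_top: "\<zeta> (x \<cdot> top) = \<zeta> x"
  using support_stable[of x top] by (simp add: support_top unit_right)

lemma support_eq: "\<zeta> x = inf (x \<cdot> top) e"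
proof (rule antisym)
  have "\<zeta> x \<le> x \<cdot> top"
    using support_le_mult_star mult_mono[OF order_refl top_greatest] by (rule order_trans)
  then show "\<zeta> x \<le> inf (x \<cdot> top) e"
    by (simp add: support_le_unit)
  have "inf (x \<cdot> top) e = \<zeta> (inf (x \<cdot> top) e)"
    by (simp add: support_subunit)
  also have "\<dots> \<le> \<zeta> x"
    using support_mono[of "inf (x \<cdot> top) e" "x \<cdot> top"] by (simp add: support_mult_top)
  finally show "inf (x \<cdot> top) e \<le> \<zeta> x" .
qed

lemma subunit_mult_top_inf_unit: "a \<le> e \<Longrightarrow> inf (a \<cdot> top) e = a"
  using support_eq[of a] by (simp add: support_subunit)

lemma top_mult_subunit_inf_unit:
  assumes "a \<le> e"
  shows "inf (top \<cdot> a) e = a"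
proof -
  have "star (inf (top \<cdot> a) e) = inf (a \<cdot> top) e"
    using assms by (simp add: star_inf star_mult star_subunit star_top star_unit)
  then show ?thesis
    using assms by (simp add: star_inject star_subunit subunit_mult_top_inf_unit)
qed

lemma subunit_mult_left: "a \<le> e \<Longrightarrow> a \<cdot> x = inf (a \<cdot> top) x"
proof (rule antisym)
  assume a: "a \<le> e"
  show "a \<cdot> x \<le> inf (a \<cdot> top) x"
    using mult_mono[OF order_refl top_greatest, of a x] mult_mono[OF a order_refl, of x]
    by (simp add: unit_left)
  let ?y = "inf (a \<cdot> top) x"
  have "\<zeta> ?y \<le> a"
    using support_mono[of ?y "a \<cdot> top"] a by (simp add: support_mult_top support_subunit)
  then have "\<zeta> ?y \<cdot> ?y \<le> a \<cdot> x"
    by (rule mult_mono) simp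
  then show "?y \<le> a \<cdot> x"
    by (simp add: support_mult)
qed

lemma subunit_mult_right:
  assumes "a \<le> e"
  shows "x \<cdot> a = inf x (top \<cdot> a)"
proof -
  have "star (x \<cdot> a) = star (inf x (top \<cdot> a))"
    using assms subunit_mult_left[OF assms, of "star x"]
    by (simp add: star_inf star_mult star_subunit star_top inf_commute)
  then show ?thesis
    by (simp add: star_inject)
qed

lemma bimodule_down_unit:
  assumes frame: "is_frame_type TYPE('q)"
  shows "bimodule {a. a \<le> e} mult mult"
proof -
  have "inf a b \<cdot> m = a \<cdot> (b \<cdot> m)" and "m \<cdot> inf a b = m \<cdot> a \<cdot> b"
    if "a \<le> e" and "b \<le> e" for a b m
    using that by (simp_all add: subunit_mult[symmetric] mult_assoc)
  then show ?thesis
    unfolding bimodule_def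
    using locale_carrier_atMost[OF frame] join_pres_mult_left join_pres_mult_right
    by (auto simp: Sup_Collect_le unit_left unit_right mult_assoc join_pres_def)
qed

lemma based_quantal_frame_down_unit:
  assumes frame: "is_frame_type TYPE('q)"
  shows "based_quantal_frame {a. a \<le> e} mult mult mult star"
proof -
  have "AA_quantale {a. a \<le> e} mult mult mult"
    unfolding AA_quantale_def
    using bimodule_down_unit[OF frame] join_pres_mult_left join_pres_mult_right
    by (simp add: mult_assoc)
  moreover have "star (a \<cdot> (x \<cdot> b)) = b \<cdot> (star x \<cdot> a)" if "a \<le> e" and "b \<le> e" for a b x
    using that by (simp add: star_mult star_subunit mult_assoc)
  moreover have "inf (a \<cdot> x) y = a \<cdot> inf x y" and "inf (x \<cdot> a) y = inf x y \<cdot> a"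
    if "a \<le> e" for a x y
    using subunit_mult_left[OF that, of x] subunit_mult_left[OF that, of "inf x y"]
      subunit_mult_right[OF that, of x] subunit_mult_right[OF that, of "inf x y"]
    by (simp_all add: inf_aci)
  ultimately show ?thesis
    unfolding based_quantal_frame_def involutive_AA_quantale_def
    using frame join_pres_star star_star star_mult by auto
qed

lemma is_support_down_unit: "is_support {a. a \<le> e} mult mult star \<zeta>"
  unfolding is_support_def
  using support_le_unit join_pres_support support_top support_le_mult_star support_mult
  by (auto simp: Sup_Collect_le intro: mult_mono)

lemma equivariant_support_down_unit: "equivariant_support {a. a \<le> e} mult \<zeta>"
  unfolding equivariant_support_def
proof (intro ballI allI)
  fix a x assume "a \<in> {a. a \<le> e}"
  then have a: "a \<le> e" by simp
  have "\<zeta> (a \<cdot> x) = \<zeta> (a \<cdot> \<zeta> x)"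
    by (rule support_stable)
  also have "\<dots> = \<zeta> (inf a (\<zeta> x))"
    using a by (simp add: subunit_mult support_le_unit)
  also have "\<dots> = inf a (\<zeta> x)"
    using a by (simp add: le_infI1 support_subunit)
  finally show "\<zeta> (a \<cdot> x) = inf a (\<zeta> x)" .
qed

lemma reflexive_bqf_down_unit:
  assumes frame: "is_frame_type TYPE('q)"
  shows "reflexive_bqf {a. a \<le> e} mult mult (\<lambda>q. inf q e)"
  unfolding reflexive_bqf_def frame_hom_to_def join_pres_def
  by (auto simp: frame_Sup_inf[OF frame] Sup_Collect_le subunit_mult_top_inf_unit
      top_mult_subunit_inf_unit inf_left_commute inf_assoc)

lemma inverse_law_down_unit:
  assumes cover: "Sup {s. sup (s \<cdot> star s) (star s \<cdot> s) \<le> e} = top"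
  shows "inverse_law mult mult star (\<lambda>q. inf q e)"
  unfolding inverse_law_def
proof (intro allI antisym)
  fix a
  let ?b = "inf a e"
  let ?S = "{inf x y | x y. x \<cdot> star y \<le> a}"
  let ?P = "{s. sup (s \<cdot> star s) (star s \<cdot> s) \<le> e}"
  have "?b \<cdot> top = ?b \<cdot> Sup ?P"
    using cover by simp
  also have "\<dots> = (SUP s\<in>?P. ?b \<cdot> s)"
    using join_pres_mult_right unfolding join_pres_def by blast
  also have "\<dots> \<le> Sup ?S"
  proof (rule SUP_least)
    fix s assume "s \<in> ?P"
    then have "s \<cdot> star s \<le> e" by simp
    then have "?b \<cdot> (s \<cdot> star s) \<cdot> ?b \<le> ?b \<cdot> e \<cdot> ?b"
      by (intro mult_mono) simp_all
    then have "?b \<cdot> s \<cdot> star (?b \<cdot> s) \<le> a"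
      by (simp add: star_mult star_subunit mult_assoc unit_left subunit_mult)
    then have "inf (?b \<cdot> s) (?b \<cdot> s) \<in> ?S"
      by blast
    then have "inf (?b \<cdot> s) (?b \<cdot> s) \<le> Sup ?S"
      by (rule Sup_upper)
    then show "?b \<cdot> s \<le> Sup ?S"
      by simp
  qed
  finally show "?b \<cdot> top \<le> Sup ?S" .
  show "Sup ?S \<le> ?b \<cdot> top"
  proof (rule Sup_least)
    fix w assume "w \<in> ?S"
    then have "w \<cdot> star w \<le> a"
      using mult_star_inf_le by blast
    then have "\<zeta> w \<le> ?b"
      using support_le_mult_star[of w] support_le_unit[of w] by (simp add: order_trans)
    then have "\<zeta> w \<cdot> w \<le> ?b \<cdot> top"
      by (rule mult_mono) simp
    then show "w \<le> ?b \<cdot> top"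
      by (simp add: support_mult)
  qed
qed

end

theorem theorem5p10:
  shows
  "(\<forall>(AC :: 'a::complete_lattice set) (lact :: 'a \<Rightarrow> 'q::complete_lattice \<Rightarrow> 'q)
      (ract :: 'q \<Rightarrow> 'a \<Rightarrow> 'q) (mult :: 'q \<Rightarrow> 'q \<Rightarrow> 'q) (star :: 'q \<Rightarrow> 'q)
      (\<sigma> :: 'q \<Rightarrow> 'a) (\<upsilon> :: 'q \<Rightarrow> 'a) (e :: 'q).
      based_quantal_frame AC lact ract mult star \<and>
      is_support AC lact mult star \<sigma> \<and> equivariant_support AC lact \<sigma> \<and>
      reflexive_bqf AC lact ract \<upsilon> \<and>
      mult_unit mult e \<and>
      inverse_law lact mult star \<upsilon>
      \<longrightarrow> inverse_quantal_frame mult star e)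
   \<and>
   (\<forall>(mult :: 'p::complete_lattice \<Rightarrow> 'p \<Rightarrow> 'p) (star :: 'p \<Rightarrow> 'p) (e :: 'p).
      inverse_quantal_frame mult star e \<longrightarrow>
      (let AC = {a. a \<le> e}; \<sigma> = (\<lambda>q. inf (mult q top) e); \<upsilon> = (\<lambda>q. inf q e) in
        based_quantal_frame AC mult mult mult star \<and>
        is_support AC mult mult star \<sigma> \<and> equivariant_support AC mult \<sigma> \<and>
        reflexive_bqf AC mult mult \<upsilon> \<and>
        inverse_law mult mult star \<upsilon>))"
proof (intro conjI allI impI)
  fix AC :: "'a::complete_lattice set" and lact :: "'a \<Rightarrow> 'q::complete_lattice \<Rightarrow> 'q"
    and ract mult star \<sigma> \<upsilon> e
  assume "based_quantal_frame AC lact ract mult star \<and>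
      is_support AC lact mult star \<sigma> \<and> equivariant_support AC lact \<sigma> \<and>
      reflexive_bqf AC lact ract \<upsilon> \<and> mult_unit mult e \<and> inverse_law lact mult star \<upsilon>"
  then show "inverse_quantal_frame mult star e"
    using inverse_quantal_frame_if_inverse_law by blast
next
  fix mult :: "'p::complete_lattice \<Rightarrow> 'p \<Rightarrow> 'p" and star e
  assume "inverse_quantal_frame mult star e"
  then obtain \<zeta> where uiq: "unital_involutive_quantale mult star e"
    and frame: "is_frame_type TYPE('p)" and stable: "stable_unital_support mult star e \<zeta>"
    and cover: "Sup {s. sup (mult s (star s)) (mult (star s) s) \<le> e} = top"
    unfolding inverse_quantal_frame_def by blast
  interpret stably_supported_quantale mult star e \<zeta>
    using uiq stable by unfold_locales
  have "(\<lambda>q. inf (mult q top) e) = \<zeta>"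
    by (simp add: support_eq fun_eq_iff)
  then show "let AC = {a. a \<le> e}; \<sigma> = (\<lambda>q. inf (mult q top) e); \<upsilon> = (\<lambda>q. inf q e) in
      based_quantal_frame AC mult mult mult star \<and>
      is_support AC mult mult star \<sigma> \<and> equivariant_support AC mult \<sigma> \<and>
      reflexive_bqf AC mult mult \<upsilon> \<and> inverse_law mult mult star \<upsilon>"
    unfolding Let_def
    using based_quantal_frame_down_unit[OF frame] is_support_down_unit
      equivariant_support_down_unit reflexive_bqf_down_unit[OF frame] inverse_law_down_unit[OF cover]
    by simp
qed

end
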